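(* Let $n\ge 3$. For a generic framed $n$-gon $(B_1,\dots,B_n;u_1,\dots,u_n)$ and each $i$, let $C_i$ be the unique circle passing through $B_{i-1}$ and $B_i$ and tangent to $u_{i-1}$ at $B_{i-1}$ and to $u_i$ at $B_i$, and orient the chain $(C_1,\dots,C_n)$ by the rotation of the circles given by the framing vectors. This defines a map $\mathcal F_n^\circ\to\mathcal C_n^\circ$ from generic framed $n$-gons to generic oriented chains of $n$ circles, and this map is a bijection.
   Context: Indices are mod $n$. For nonzero plane vectors $u,v$, $\angle(u,v)\in\mathbb{R}/2\pi\mathbb{Z}$ is the counterclockwise angle from $u$ to $v$. A framed $n$-gon is a tuple $(B_1,\dots,B_n;u_1,\dots,u_n)$ of points with $B_i\neq B_{i+1}$ and unit vectors $u_i$ with $\angle(u_i,B_{i+1}-B_i)=\angle(B_{i+1}-B_i,u_{i+1})$ for all $i$; $(u_i)$ and $(-u_i)$ are identified. A framed polygon is non-generic if for some $i$ the vectors $u_{i-1},u_i,u_{i+1}$ are tangent to the circle through $B_{i-1},B_i,B_{i+1}$; otherwise generic; $\mathcal F_n^\circ$ is the set of generic framed $n$-gons. An oriented chain of $n$ circles is a collection of circles $C_1,\dots,C_n$ with $C_i$ tangent to $C_{i+1}$ and $C_i\ne C_{i+1}$, with signs assigned to the circles so that externally tangent consecutive circles have opposite signs and internally tangent ones have equal signs, up to simultaneous change of all signs (equivalently, the circles can be rotated consistently like linked gears, circles of the same sign rotating in the same sense). A chain is non-generic if for some $i$ the tangency point of $C_{i-1}$ with $C_i$ coincides with the tangency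 point of $C_i$ with $C_{i+1}$; otherwise generic; $\mathcal C_n^\circ$ is the set of generic oriented chains. *)

theory Defs
  imports "HOL-Analysis.Analysis"
begin

text \<open>The plane is the complex plane. Polygons and chains are lists of length n,
  indices taken mod n.\<close>

definition nxt :: "nat \<Rightarrow> nat \<Rightarrow> nat" where
  "nxt n i = (i + 1) mod n"

definition prv :: "nat \<Rightarrow> nat \<Rightarrow> nat" where
  "prv n i = (i + n - 1) mod n"

text \<open>Counterclockwise angle from u to v, represented by its canonical
  representative in (-pi, pi] (so equality of these values is equality in R/2piZ).\<close>
definition ccw_angle :: "complex \<Rightarrow> complex \<Rightarrow> real" where
  "ccw_angle u v = Arg (v / u)"

text \<open>Oriented generalized circles (circles and lines), each represented by its set of
  contact elements (point, unit tangent vector in the direction of traversal).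
  s = 1: counterclockwise circle, s = -1: clockwise circle; lines are oriented by
  a unit direction vector.\<close>
definition oriented_circles :: "(complex \<times> complex) set set" where
  "oriented_circles =
     {{(p, s * \<i> * (p - c) / complex_of_real r) | p. cmod (p - c) = r} | c r s.
        r > 0 \<and> (s = 1 \<or> s = -1)}
   \<union> {{(a + complex_of_real t * v, v) | t. True} | a v. cmod v = 1}"

definition gcircles :: "complex set set" where
  "gcircles = (\<lambda>\<Gamma>. fst ` \<Gamma>) ` oriented_circles"

definition tangent_at :: "complex set \<Rightarrow> complex \<Rightarrow> complex \<Rightarrow> bool" where
  "tangent_at S p v \<longleftrightarrow> p \<in> S \<and> (\<exists>\<Gamma>\<in>oriented_circles. fst ` \<Gamma> = S \<and> (p, v) \<in> \<Gamma>)"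

text \<open>Framed n-gons (before identifying (u_i) with (-u_i)).\<close>
definition framed :: "nat \<Rightarrow> (complex list \<times> complex list) set" where
  "framed n = {(B, u). length B = n \<and> length u = n \<and>
     (\<forall>i<n. B ! i \<noteq> B ! nxt n i \<and> cmod (u ! i) = 1 \<and>
        ccw_angle (u ! i) (B ! nxt n i - B ! i) = ccw_angle (B ! nxt n i - B ! i) (u ! nxt n i))}"

definition generic_framed :: "nat \<Rightarrow> (complex list \<times> complex list) set" where
  "generic_framed n = {(B, u) \<in> framed n.
     \<not> (\<exists>i<n. \<exists>S\<in>gcircles.
          tangent_at S (B ! prv n i) (u ! prv n i) \<and> tangent_at S (B ! i) (u ! i) \<and>
          tangent_at S (B ! nxt n i) (u ! nxt n i))}"

definition frame_rel :: "nat \<Rightarrow> ((complex list \<times> complex list) \<times> (complex list \<times> complex list)) set" where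
  "frame_rel n = {(p, q). p \<in> generic_framed n \<and> q \<in> generic_framed n \<and>
      fst q = fst p \<and> (snd q = snd p \<or> snd q = map uminus (snd p))}"

text \<open>Oriented chains of n circles: consecutive circles are distinct and tangent with
  compatible orientations (linked gears: they share a contact element, i.e. have the
  same oriented tangent vector at the tangency point).\<close>
definition oriented_chains :: "nat \<Rightarrow> (complex \<times> complex) set list set" where
  "oriented_chains n = {C. length C = n \<and> (\<forall>i<n. C ! i \<in> oriented_circles \<and>
      fst ` (C ! i) \<noteq> fst ` (C ! nxt n i) \<and> C ! i \<inter> C ! nxt n i \<noteq> {})}"

definition tangency_point :: "(complex \<times> complex) set \<Rightarrow> (complex \<times> complex) set \<Rightarrow> complex" where
  "tangency_point \<Gamma> \<Delta> = the_elem (fst ` \<Gamma> \<inter> fst ` \<Delta>)"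

definition generic_chains :: "nat \<Rightarrow> (complex \<times> complex) set list set" where
  "generic_chains n = {C \<in> oriented_chains n. \<forall>i<n.
      tangency_point (C ! prv n i) (C ! i) \<noteq> tangency_point (C ! i) (C ! nxt n i)}"

definition reverse_orientation :: "(complex \<times> complex) set \<Rightarrow> (complex \<times> complex) set" where
  "reverse_orientation \<Gamma> = (\<lambda>(p, t). (p, - t)) ` \<Gamma>"

definition chain_rel :: "nat \<Rightarrow> ((complex \<times> complex) set list \<times> (complex \<times> complex) set list) set" where
  "chain_rel n = {(C, D). C \<in> generic_chains n \<and> D \<in> generic_chains n \<and>
      (D = C \<or> D = map reverse_orientation C)}"

definition chain_of :: "nat \<Rightarrow> complex list \<times> complex list \<Rightarrow> (complex \<times> complex) set list" where
  "chain_of n p = map (\<lambda>i. THE \<Gamma>. \<Gamma> \<in> oriented_circles \<and>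
        (fst p ! prv n i, snd p ! prv n i) \<in> \<Gamma> \<and> (fst p ! i, snd p ! i) \<in> \<Gamma>) [0..<n]"

definition chain_map :: "nat \<Rightarrow> (complex list \<times> complex list) set \<Rightarrow> (complex \<times> complex) set list set" where
  "chain_map n X = chain_rel n `` {chain_of n (SOME p. p \<in> X)}"

end

theory Submission
  imports Defs
begin

text \<open>Every oriented generalized circle through a contact element \<open>(p, v)\<close> belongs to the
  pencil \<open>curvature_circle p v k\<close>, \<open>k\<close> its signed curvature. A second contact element
  \<open>(q, w)\<close>, \<open>q \<noteq> p\<close>, lies on a member of this pencil iff \<open>w\<close> is the reflection of \<open>v\<close> in
  the chord direction \<open>q - p\<close>, which is precisely the framing condition; the member is then
  unique. Two distinct members of the pencil meet only in \<open>(p, v)\<close>, so consecutive circles of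
  the chain built from a framed polygon meet exactly in the contact element \<open>(B\<^sub>i, u\<^sub>i)\<close>: the
  polygon is recovered from its chain, and every generic chain arises from the polygon of its
  tangency points and common tangent vectors. Negating the frame reverses every circle.\<close>

section \<open>Oriented circles as pencils of curvature circles\<close>

text \<open>\<open>k = 0\<close> gives the line through \<open>p\<close> in direction \<open>v\<close>; otherwise the centre is
  \<open>p + \<i> v / k\<close>.\<close>

definition curvature_circle :: "complex \<Rightarrow> complex \<Rightarrow> real \<Rightarrow> (complex \<times> complex) set" where
  "curvature_circle p v k =
     {(x, v + \<i> * of_real k * (x - p)) | x. k * (cmod (x - p))^2 = 2 * Re (cnj (x - p) * \<i> * v)}"

lemma mem_curvature_circle:
  "(x, y) \<in> curvature_circle p v k \<longleftrightarrow>
     k * (cmod (x - p))^2 = 2 * Re (cnj (x - p) * \<i> * v) \<and> y = v + \<i> * of_real k * (x - p)"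
  unfolding curvature_circle_def by auto

lemma Re_cnj_mult_i: "Re (cnj z * \<i> * v) = Im z * Re v - Re z * Im v"
  by simp

lemma cmod_eq_iff_sum_squares: "r \<ge> 0 \<Longrightarrow> cmod z = r \<longleftrightarrow> (Re z)^2 + (Im z)^2 = r^2"
  by (metis cmod_power2 norm_ge_zero power2_eq_iff_nonneg)

lemma cnj_mult_unit: "cmod v = 1 \<Longrightarrow> cnj v * v = 1"
  by (metis complex_norm_square mult.commute of_real_1 power_one)

lemma ccw_angle_eq_iff_reflection:
  assumes "cmod v = 1" "cmod w = 1" "d \<noteq> 0"
  shows "ccw_angle v d = ccw_angle d w \<longleftrightarrow> w * cnj d = d * cnj v"
proof -
  have v0: "v \<noteq> 0" "w \<noteq> 0" using assms by auto
  have iv: "1 / v = cnj v" using cnj_mult_unit[OF assms(1)] v0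
    by (metis divide_eq_eq mult.commute)
  have dd: "d * cnj d = of_real ((cmod d)^2)" by (metis complex_norm_square of_real_power)
  have "ccw_angle v d = ccw_angle d w \<longleftrightarrow> (\<exists>x. 0 < x \<and> d / v = of_real x * (w / d))"
    unfolding ccw_angle_def using assms v0 by (intro Arg_eq_iff) auto
  also have "\<dots> \<longleftrightarrow> w * cnj d = d * cnj v"
  proof
    assume "\<exists>x. 0 < x \<and> d / v = of_real x * (w / d)"
    then obtain x where x: "0 < x" "d / v = of_real x * (w / d)" by blast
    have "cmod d = cmod (d / v)" using assms by (simp add: norm_divide)
    also have "\<dots> = x / cmod d" using assms x by (simp add: norm_divide norm_mult)
    finally have "x = (cmod d)^2" using assms by (simp add: power2_eq_square eq_divide_eq)
    have "d * cnj v = d / v" by (simp flip: iv)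
    also have "\<dots> = of_real ((cmod d)^2) * w / d" using x \<open>x = (cmod d)^2\<close> by simp
    also have "\<dots> = (d * cnj d) * w / d" by (simp only: dd)
    also have "\<dots> = w * cnj d" using assms(3) by (simp add: field_simps del: complex_mult_cnj)
    finally show "w * cnj d = d * cnj v" by simp
  next
    assume h: "w * cnj d = d * cnj v"
    show "\<exists>x. 0 < x \<and> d / v = of_real x * (w / d)"
    proof (intro exI conjI)
      show "0 < (cmod d)^2" using assms by simp
      have "d / v = d * cnj v" by (simp flip: iv)
      also have "\<dots> = w * cnj d" using h by simp
      also have "\<dots> = (d * cnj d) * (w / d)" using assms(3) by (simp add: field_simps del: complex_mult_cnj)
      finally show "d / v = of_real ((cmod d)^2) * (w / d)" by (simp only: dd)
    qed
  qed
  finally show ?thesis .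
qed

definition round_circle :: "complex \<Rightarrow> real \<Rightarrow> complex \<Rightarrow> (complex \<times> complex) set" where
  "round_circle c r s = {(p, s * \<i> * (p - c) / complex_of_real r) | p. cmod (p - c) = r}"

definition oriented_line :: "complex \<Rightarrow> complex \<Rightarrow> (complex \<times> complex) set" where
  "oriented_line a v = {(a + complex_of_real t * v, v) | t. True}"

lemma oriented_circles_alt:
  "oriented_circles = {round_circle c r s | c r s. r > 0 \<and> (s = 1 \<or> s = -1)}
     \<union> {oriented_line a v | a v. cmod v = 1}"
  unfolding oriented_circles_def round_circle_def oriented_line_def by blast

lemma mem_round_circle:
  "(x, y) \<in> round_circle c r s \<longleftrightarrow> cmod (x - c) = r \<and> y = s * \<i> * (x - c) / complex_of_real r"
  unfolding round_circle_def by auto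

lemma mem_oriented_line: "(x, y) \<in> oriented_line a v \<longleftrightarrow> y = v \<and> (\<exists>t. x = a + complex_of_real t * v)"
  unfolding oriented_line_def by auto

lemma round_circle_eq_curvature_circle:
  assumes r: "r > 0" and s: "s = 1 \<or> s = -1" and pv: "(p, v) \<in> round_circle c r s"
  shows "round_circle c r s = curvature_circle p v (Re s / r)"
proof -
  have p: "cmod (p - c) = r" and v: "v = s * \<i> * (p - c) / complex_of_real r"
    using pv by (auto simp: mem_round_circle)
  have p2: "(Re p - Re c)^2 + (Im p - Im c)^2 = r^2"
    using p cmod_eq_iff_sum_squares[of r "p - c"] r by simp
  have on_circle: "cmod (x - c) = r \<longleftrightarrow> (Re s / r) * (cmod (x - p))^2 = 2 * Re (cnj (x - p) * \<i> * v)"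
    for x
  proof -
    have "cmod (x - c) = r \<longleftrightarrow> (Re x - Re c)^2 + (Im x - Im c)^2 = r^2"
      using cmod_eq_iff_sum_squares[of r "x - c"] r by simp
    also have "\<dots> \<longleftrightarrow> (Re x - Re p)^2 + (Im x - Im p)^2
        = - 2 * ((Re x - Re p) * (Re p - Re c) + (Im x - Im p) * (Im p - Im c))"
      using p2 by algebra
    also have "\<dots> \<longleftrightarrow> (Re s / r) * (cmod (x - p))^2 = 2 * Re (cnj (x - p) * \<i> * v)"
      using s r unfolding v cmod_power2 by (auto simp: field_simps)
    finally show ?thesis .
  qed
  have tangent: "s * \<i> * (x - c) / complex_of_real r = v + \<i> * complex_of_real (Re s / r) * (x - p)"
    for x using s r unfolding v by (auto simp: field_simps)
  show ?thesis
  proof (rule set_eqI, clarify)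
    fix x y
    show "(x, y) \<in> round_circle c r s \<longleftrightarrow> (x, y) \<in> curvature_circle p v (Re s / r)"
      unfolding mem_round_circle mem_curvature_circle using on_circle[of x] tangent[of x] by auto
  qed
qed

lemma on_line_iff:
  assumes "cmod v = 1"
  shows "(\<exists>t. x = p + complex_of_real t * v) \<longleftrightarrow> Re (cnj (x - p) * \<i> * v) = 0"
proof
  assume "\<exists>t. x = p + complex_of_real t * v"
  then obtain t where "x = p + complex_of_real t * v" by blast
  then show "Re (cnj (x - p) * \<i> * v) = 0" by (simp add: algebra_simps)
next
  assume h: "Re (cnj (x - p) * \<i> * v) = 0"
  define a where "a = Re x - Re p"
  define b where "b = Im x - Im p"
  have h2: "b * Re v = a * Im v" using h unfolding Re_cnj_mult_i a_def b_def by simp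
  have u: "(Re v)^2 + (Im v)^2 = 1" using assms cmod_eq_iff_sum_squares[of 1 v] by simp
  let ?t = "a * Re v + b * Im v"
  have "?t * Re v = a * (Re v)^2 + (b * Re v) * Im v" by (simp add: algebra_simps power2_eq_square)
  also have "\<dots> = a * ((Re v)^2 + (Im v)^2)" using h2 by (simp add: algebra_simps power2_eq_square)
  finally have ha: "a = ?t * Re v" using u by simp
  have "?t * Im v = (a * Im v) * Re v + b * (Im v)^2" by (simp add: algebra_simps power2_eq_square)
  also have "\<dots> = b * ((Re v)^2 + (Im v)^2)" using h2[symmetric] by (simp add: algebra_simps power2_eq_square)
  finally have hb: "b = ?t * Im v" using u by simp
  show "\<exists>t. x = p + complex_of_real t * v"
    by (intro exI[of _ ?t]) (use ha hb in \<open>simp add: complex_eq_iff a_def b_def\<close>)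
qed

lemma oriented_line_eq_curvature_circle:
  assumes v: "cmod v = 1" and pw: "(p, w) \<in> oriented_line a v"
  shows "oriented_line a v = curvature_circle p v 0" "w = v"
proof -
  obtain t0 where p: "p = a + complex_of_real t0 * v" and "w = v"
    using pw by (auto simp: mem_oriented_line)
  then show "w = v" by simp
  have same_line: "(\<exists>t. x = a + complex_of_real t * v) \<longleftrightarrow> (\<exists>t. x = p + complex_of_real t * v)" for x
  proof
    assume "\<exists>t. x = a + complex_of_real t * v"
    then obtain t where "x = a + complex_of_real t * v" by blast
    then have "x = p + complex_of_real (t - t0) * v" by (simp add: p algebra_simps)
    then show "\<exists>t. x = p + complex_of_real t * v" by blast
  next
    assume "\<exists>t. x = p + complex_of_real t * v"
    then obtain t where "x = p + complex_of_real t * v" by blast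
    then have "x = a + complex_of_real (t + t0) * v" by (simp add: p algebra_simps)
    then show "\<exists>t. x = a + complex_of_real t * v" by blast
  qed
  show "oriented_line a v = curvature_circle p v 0"
  proof (rule set_eqI, clarify)
    fix x y
    show "(x, y) \<in> oriented_line a v \<longleftrightarrow> (x, y) \<in> curvature_circle p v 0"
      unfolding mem_oriented_line mem_curvature_circle using same_line[of x] on_line_iff[OF v, of x p] by auto
  qed
qed

lemma oriented_circle_eq_curvature_circle:
  assumes G: "\<Gamma> \<in> oriented_circles" and pv: "(p, v) \<in> \<Gamma>"
  shows "cmod v = 1 \<and> (\<exists>k. \<Gamma> = curvature_circle p v k)"
  using G unfolding oriented_circles_alt
proof (elim UnE CollectE exE conjE)
  fix c r s assume r: "r > 0" and s: "s = 1 \<or> s = -1" and e: "\<Gamma> = round_circle c r s"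
  have "(p, v) \<in> round_circle c r s" using pv e by simp
  then have "cmod (p - c) = r" "v = s * \<i> * (p - c) / complex_of_real r" by (auto simp: mem_round_circle)
  then have "cmod v = 1" using r s by (auto simp: norm_mult norm_divide)
  then show ?thesis using round_circle_eq_curvature_circle[OF r s \<open>(p, v) \<in> round_circle c r s\<close>] e by blast
next
  fix a w assume w: "cmod w = 1" and e: "\<Gamma> = oriented_line a w"
  have "(p, v) \<in> oriented_line a w" using pv e by simp
  from oriented_line_eq_curvature_circle[OF w this] show ?thesis using e w by blast
qed

lemma curvature_circle_in_oriented_circles:
  assumes v: "cmod v = 1"
  shows "curvature_circle p v k \<in> oriented_circles"
proof (cases "k = 0")
  case True
  have "(p, v) \<in> oriented_line p v" unfolding mem_oriented_line by (auto intro: exI[of _ 0])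
  then have "oriented_line p v = curvature_circle p v 0" using oriented_line_eq_curvature_circle[OF v] by blast
  then show ?thesis using True v unfolding oriented_circles_alt by blast
next
  case False
  define c where "c = p + \<i> * v / complex_of_real k"
  define r where "r = 1 / \<bar>k\<bar>"
  define s where "s = complex_of_real (sgn k)"
  have r: "r > 0" using False by (simp add: r_def)
  have s: "s = 1 \<or> s = -1" using False by (auto simp: s_def sgn_if)
  have "(p, v) \<in> round_circle c r s"
    unfolding mem_round_circle using False v
    by (auto simp: c_def r_def s_def norm_mult norm_divide sgn_if field_simps)
  from round_circle_eq_curvature_circle[OF r s this]
  have "round_circle c r s = curvature_circle p v (Re s / r)" .
  moreover have "Re s / r = k" using False by (auto simp: s_def r_def sgn_if)
  ultimately show ?thesis using r s unfolding oriented_circles_alt by blast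
qed

lemma curvature_circle_reflection:
  assumes v: "cmod v = 1" and qw: "(q, w) \<in> curvature_circle p v k"
  shows "w * cnj (q - p) = (q - p) * cnj v"
proof -
  have h: "k * (cmod (q - p))^2 = 2 * Re (cnj (q - p) * \<i> * v)"
    and w: "w = v + \<i> * complex_of_real k * (q - p)"
    using qw by (auto simp: mem_curvature_circle)
  have u: "(Re v)^2 + (Im v)^2 = 1" using v cmod_eq_iff_sum_squares[of 1 v] by simp
  have "k * ((Re q - Re p)^2 + (Im q - Im p)^2) = 2 * ((Im q - Im p) * Re v - (Re q - Re p) * Im v)"
    using h unfolding cmod_power2 Re_cnj_mult_i by simp
  then show ?thesis unfolding w complex_eq_iff
    using u by (auto simp: algebra_simps power2_eq_square)
qed

lemma curvature_circle_curvature: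
  assumes "(q, w) \<in> curvature_circle p v k" "q \<noteq> p"
  shows "k = 2 * Re (cnj (q - p) * \<i> * v) / (cmod (q - p))^2"
  using assms by (auto simp: mem_curvature_circle field_simps)

lemma oriented_circle_unit_tangent: "\<Gamma> \<in> oriented_circles \<Longrightarrow> (p, v) \<in> \<Gamma> \<Longrightarrow> cmod v = 1"
  using oriented_circle_eq_curvature_circle by blast

lemma oriented_circle_tangent_unique:
  assumes "\<Gamma> \<in> oriented_circles" "(p, v) \<in> \<Gamma>" "(p, w) \<in> \<Gamma>"
  shows "v = w"
proof -
  obtain k where "\<Gamma> = curvature_circle p v k" using oriented_circle_eq_curvature_circle[OF assms(1,2)] by blast
  then show ?thesis using assms(3) by (simp add: mem_curvature_circle)
qed

lemma oriented_circle_reflection: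
  assumes "\<Gamma> \<in> oriented_circles" "(p, v) \<in> \<Gamma>" "(q, w) \<in> \<Gamma>"
  shows "w * cnj (q - p) = (q - p) * cnj v"
  using oriented_circle_eq_curvature_circle[OF assms(1,2)] assms(3) curvature_circle_reflection by blast

lemma oriented_circles_eq_if_contact_and_point:
  assumes G1: "\<Gamma>1 \<in> oriented_circles" and G2: "\<Gamma>2 \<in> oriented_circles"
    and "(p, v) \<in> \<Gamma>1" "(p, v) \<in> \<Gamma>2" "q \<in> fst ` \<Gamma>1" "q \<in> fst ` \<Gamma>2" "q \<noteq> p"
  shows "\<Gamma>1 = \<Gamma>2"
proof -
  obtain k1 where k1: "\<Gamma>1 = curvature_circle p v k1"
    using oriented_circle_eq_curvature_circle[OF G1 assms(3)] by blast
  obtain k2 where k2: "\<Gamma>2 = curvature_circle p v k2"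
    using oriented_circle_eq_curvature_circle[OF G2 assms(4)] by blast
  obtain w1 w2 where "(q, w1) \<in> \<Gamma>1" "(q, w2) \<in> \<Gamma>2" using assms(5,6) by force
  then have "k1 = 2 * Re (cnj (q - p) * \<i> * v) / (cmod (q - p))^2"
    "k2 = 2 * Re (cnj (q - p) * \<i> * v) / (cmod (q - p))^2"
    using curvature_circle_curvature k1 k2 assms(7) by blast+
  then show ?thesis using k1 k2 by simp
qed

lemma ex_oriented_circle_through:
  assumes v: "cmod v = 1" and "p \<noteq> q" and rel: "w * cnj (q - p) = (q - p) * cnj v"
  shows "\<exists>\<Gamma>\<in>oriented_circles. (p, v) \<in> \<Gamma> \<and> (q, w) \<in> \<Gamma>"
proof -
  define k where "k = 2 * Re (cnj (q - p) * \<i> * v) / (cmod (q - p))^2"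
  define w' where "w' = v + \<i> * complex_of_real k * (q - p)"
  have qw': "(q, w') \<in> curvature_circle p v k"
    using assms(2) unfolding mem_curvature_circle k_def w'_def by (auto simp: field_simps)
  have "w' * cnj (q - p) = w * cnj (q - p)"
    using curvature_circle_reflection[OF v qw'] rel by simp
  moreover have "cnj (q - p) \<noteq> 0" using assms(2) by simp
  ultimately have "w' = w" by simp
  moreover have "(p, v) \<in> curvature_circle p v k" by (simp add: mem_curvature_circle)
  ultimately show ?thesis using curvature_circle_in_oriented_circles[OF v] qw' by blast
qed

lemma ex1_oriented_circle_through:
  assumes "cmod v = 1" and "p \<noteq> q" and "w * cnj (q - p) = (q - p) * cnj v"
  shows "\<exists>!\<Gamma>. \<Gamma> \<in> oriented_circles \<and> (p, v) \<in> \<Gamma> \<and> (q, w) \<in> \<Gamma>"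
proof -
  obtain \<Gamma> where G: "\<Gamma> \<in> oriented_circles" "(p, v) \<in> \<Gamma>" "(q, w) \<in> \<Gamma>"
    using ex_oriented_circle_through[OF assms] by blast
  show ?thesis
  proof (rule ex1I[of _ \<Gamma>])
    show "\<Gamma> \<in> oriented_circles \<and> (p, v) \<in> \<Gamma> \<and> (q, w) \<in> \<Gamma>" using G by blast
    fix \<Delta> assume "\<Delta> \<in> oriented_circles \<and> (p, v) \<in> \<Delta> \<and> (q, w) \<in> \<Delta>"
    then show "\<Delta> = \<Gamma>"
      using oriented_circles_eq_if_contact_and_point[of \<Delta> \<Gamma> p v q] G assms(2) by force
  qed
qed

lemma tangent_at_imageI: "\<Gamma> \<in> oriented_circles \<Longrightarrow> (p, v) \<in> \<Gamma> \<Longrightarrow> tangent_at (fst ` \<Gamma>) p v"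
  unfolding tangent_at_def by (metis fst_conv image_eqI)

lemma gcircle_eq_if_tangent:
  assumes G: "\<Gamma> \<in> oriented_circles" "(p, v) \<in> \<Gamma>" "(q, w) \<in> \<Gamma>" "p \<noteq> q"
    and S: "tangent_at S p v" "q \<in> S"
  shows "S = fst ` \<Gamma>"
proof -
  obtain \<Delta> where D: "\<Delta> \<in> oriented_circles" "fst ` \<Delta> = S" "(p, v) \<in> \<Delta>"
    using S(1) unfolding tangent_at_def by blast
  have "q \<in> fst ` \<Gamma>" using G(3) by force
  then have "\<Delta> = \<Gamma>"
    using oriented_circles_eq_if_contact_and_point[of \<Delta> \<Gamma> p v q] D G S by auto
  then show ?thesis using D by simp
qed

lemma ex1_gcircle_tangent:
  assumes "cmod v = 1" and "p \<noteq> q" and "w * cnj (q - p) = (q - p) * cnj v"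
  shows "\<exists>!S. S \<in> gcircles \<and> tangent_at S p v \<and> tangent_at S q w"
proof -
  obtain \<Gamma> where G: "\<Gamma> \<in> oriented_circles" "(p, v) \<in> \<Gamma>" "(q, w) \<in> \<Gamma>"
    using ex_oriented_circle_through[OF assms] by blast
  show ?thesis
  proof (rule ex1I[of _ "fst ` \<Gamma>"])
    show "fst ` \<Gamma> \<in> gcircles \<and> tangent_at (fst ` \<Gamma>) p v \<and> tangent_at (fst ` \<Gamma>) q w"
      using G tangent_at_imageI unfolding gcircles_def by blast
    fix S assume "S \<in> gcircles \<and> tangent_at S p v \<and> tangent_at S q w"
    then show "S = fst ` \<Gamma>" using gcircle_eq_if_tangent[OF G assms(2)] unfolding tangent_at_def by blast
  qed
qed

lemma tangent_oriented_circles_meet: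
  assumes G1: "\<Gamma>1 \<in> oriented_circles" and G2: "\<Gamma>2 \<in> oriented_circles"
    and "(p, v) \<in> \<Gamma>1" "(p, v) \<in> \<Gamma>2" "fst ` \<Gamma>1 \<noteq> fst ` \<Gamma>2"
  shows "\<Gamma>1 \<inter> \<Gamma>2 = {(p, v)}" "tangency_point \<Gamma>1 \<Gamma>2 = p"
proof -
  have points: "fst ` \<Gamma>1 \<inter> fst ` \<Gamma>2 = {p}"
  proof
    show "fst ` \<Gamma>1 \<inter> fst ` \<Gamma>2 \<subseteq> {p}"
    proof
      fix q assume q: "q \<in> fst ` \<Gamma>1 \<inter> fst ` \<Gamma>2"
      show "q \<in> {p}"
      proof (rule ccontr)
        assume "q \<notin> {p}"
        then have "\<Gamma>1 = \<Gamma>2" using oriented_circles_eq_if_contact_and_point[OF G1 G2 assms(3,4)] q by blast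
        then show False using assms(5) by simp
      qed
    qed
    show "{p} \<subseteq> fst ` \<Gamma>1 \<inter> fst ` \<Gamma>2" using assms(3,4) by force
  qed
  then show "tangency_point \<Gamma>1 \<Gamma>2 = p" unfolding tangency_point_def by simp
  show "\<Gamma>1 \<inter> \<Gamma>2 = {(p, v)}"
  proof
    show "\<Gamma>1 \<inter> \<Gamma>2 \<subseteq> {(p, v)}"
    proof clarify
      fix x y assume xy: "(x, y) \<in> \<Gamma>1" "(x, y) \<in> \<Gamma>2"
      then have "x = p" using points by force
      then show "x = p \<and> y = v" using oriented_circle_tangent_unique[OF G1 assms(3)] xy by blast
    qed
    show "{(p, v)} \<subseteq> \<Gamma>1 \<inter> \<Gamma>2" using assms(3,4) by simp
  qed
qed

lemma mem_reverse_orientation: "(p, v) \<in> reverse_orientation \<Gamma> \<longleftrightarrow> (p, - v) \<in> \<Gamma>"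
  unfolding reverse_orientation_def by force

lemma reverse_orientation_involution: "reverse_orientation (reverse_orientation \<Gamma>) = \<Gamma>"
  unfolding reverse_orientation_def by (force simp: image_image)

lemma fst_reverse_orientation: "fst ` reverse_orientation \<Gamma> = fst ` \<Gamma>"
  unfolding reverse_orientation_def by (force simp: image_image)

lemma oriented_circle_nonempty: "\<Gamma> \<in> oriented_circles \<Longrightarrow> \<Gamma> \<noteq> {}"
  unfolding oriented_circles_alt
proof (elim UnE CollectE exE conjE)
  fix c r s assume "r > 0" "\<Gamma> = round_circle c r s"
  moreover have "(c + complex_of_real r, s * \<i>) \<in> round_circle c r s"
    using \<open>r > 0\<close> unfolding mem_round_circle by simp
  ultimately show "\<Gamma> \<noteq> {}" by blast
next
  fix a v assume "\<Gamma> = oriented_line a v"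
  moreover have "(a, v) \<in> oriented_line a v" unfolding mem_oriented_line by (auto intro: exI[of _ 0])
  ultimately show "\<Gamma> \<noteq> {}" by blast
qed

lemma reverse_curvature_circle: "reverse_orientation (curvature_circle p v k) = curvature_circle p (- v) (- k)"
  by (rule set_eqI, clarify) (auto simp: mem_reverse_orientation mem_curvature_circle algebra_simps)

lemma reverse_orientation_in_oriented_circles:
  assumes G: "\<Gamma> \<in> oriented_circles"
  shows "reverse_orientation \<Gamma> \<in> oriented_circles"
proof -
  obtain p v where "(p, v) \<in> \<Gamma>" using oriented_circle_nonempty[OF G] by auto
  then obtain k where "\<Gamma> = curvature_circle p v k" "cmod v = 1"
    using oriented_circle_eq_curvature_circle[OF G] by blast
  then show ?thesis using reverse_curvature_circle curvature_circle_in_oriented_circles[of "- v"] by simp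
qed

lemma tangent_at_uminus: "tangent_at S p (- v) \<Longrightarrow> tangent_at S p v"
proof -
  assume "tangent_at S p (- v)"
  then obtain \<Gamma> where "p \<in> S" "\<Gamma> \<in> oriented_circles" "fst ` \<Gamma> = S" "(p, - v) \<in> \<Gamma>"
    unfolding tangent_at_def by blast
  then have "reverse_orientation \<Gamma> \<in> oriented_circles" "fst ` reverse_orientation \<Gamma> = S"
    "(p, v) \<in> reverse_orientation \<Gamma>"
    using reverse_orientation_in_oriented_circles fst_reverse_orientation mem_reverse_orientation by auto
  then show ?thesis unfolding tangent_at_def using \<open>p \<in> S\<close> by blast
qed

section \<open>The chain of a framed polygon\<close>

lemma nxt_less: "i < n \<Longrightarrow> nxt n i < n"
  by (simp add: nxt_def)

lemma prv_less: "i < n \<Longrightarrow> prv n i < n"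
  by (simp add: prv_def)

lemma prv_nxt: "i < n \<Longrightarrow> prv n (nxt n i) = i"
proof (cases "i + 1 < n")
  case True
  then show ?thesis by (simp add: nxt_def prv_def)
next
  case False
  moreover assume "i < n"
  ultimately have "i + 1 = n" by simp
  then show ?thesis by (simp add: nxt_def prv_def)
qed

lemma nxt_prv: "i < n \<Longrightarrow> nxt n (prv n i) = i"
proof (cases "i = 0")
  case True
  moreover assume "i < n"
  ultimately show ?thesis by (simp add: nxt_def prv_def)
next
  case False
  assume i: "i < n"
  have "i + n - 1 = (i - 1) + n" using False by simp
  then have "prv n i = ((i - 1) + n) mod n" unfolding prv_def by simp
  also have "\<dots> = i - 1" using i by simp
  finally show ?thesis using i False by (simp add: nxt_def)
qed

lemma framed_length: "(B, u) \<in> framed n \<Longrightarrow> length B = n \<and> length u = n"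
  unfolding framed_def by auto

lemma framed_edge:
  assumes "(B, u) \<in> framed n" "i < n"
  shows "B ! i \<noteq> B ! nxt n i" "cmod (u ! i) = 1" "cmod (u ! nxt n i) = 1"
    "u ! nxt n i * cnj (B ! nxt n i - B ! i) = (B ! nxt n i - B ! i) * cnj (u ! i)"
proof -
  have a: "B ! i \<noteq> B ! nxt n i" "cmod (u ! i) = 1"
    "ccw_angle (u ! i) (B ! nxt n i - B ! i) = ccw_angle (B ! nxt n i - B ! i) (u ! nxt n i)"
    using assms unfolding framed_def by auto
  have b: "cmod (u ! nxt n i) = 1" using assms nxt_less[OF assms(2)] unfolding framed_def by auto
  show "B ! i \<noteq> B ! nxt n i" "cmod (u ! i) = 1" "cmod (u ! nxt n i) = 1" using a b by auto
  show "u ! nxt n i * cnj (B ! nxt n i - B ! i) = (B ! nxt n i - B ! i) * cnj (u ! i)"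
    using ccw_angle_eq_iff_reflection[OF a(2) b] a by simp
qed

lemma framed_prv_edge:
  assumes "(B, u) \<in> framed n" "i < n"
  shows "B ! prv n i \<noteq> B ! i" "cmod (u ! prv n i) = 1"
    "u ! i * cnj (B ! i - B ! prv n i) = (B ! i - B ! prv n i) * cnj (u ! prv n i)"
  using framed_edge[OF assms(1) prv_less[OF assms(2)]] unfolding nxt_prv[OF assms(2)] by simp_all

lemma framed_unique_circles:
  assumes "(B, u) \<in> framed n" "i < n"
  shows "\<exists>!\<Gamma>. \<Gamma> \<in> oriented_circles \<and> (B ! prv n i, u ! prv n i) \<in> \<Gamma> \<and> (B ! i, u ! i) \<in> \<Gamma>"
    "\<exists>!S. S \<in> gcircles \<and> tangent_at S (B ! prv n i) (u ! prv n i) \<and> tangent_at S (B ! i) (u ! i)"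
proof -
  note e = framed_prv_edge[OF assms]
  show "\<exists>!\<Gamma>. \<Gamma> \<in> oriented_circles \<and> (B ! prv n i, u ! prv n i) \<in> \<Gamma> \<and> (B ! i, u ! i) \<in> \<Gamma>"
    using ex1_oriented_circle_through[OF e(2) e(1) e(3)] .
  show "\<exists>!S. S \<in> gcircles \<and> tangent_at S (B ! prv n i) (u ! prv n i) \<and> tangent_at S (B ! i) (u ! i)"
    using ex1_gcircle_tangent[OF e(2) e(1) e(3)] .
qed

lemma framed_uminus_frame:
  assumes F: "(B, u) \<in> framed n"
  shows "(B, map uminus u) \<in> framed n"
  unfolding framed_def
proof (intro CollectI case_prodI conjI allI impI)
  show "length B = n" "length (map uminus u) = n" using framed_length[OF F] by auto
  fix i assume i: "i < n"
  have mi: "map uminus u ! i = - (u ! i)" "map uminus u ! nxt n i = - (u ! nxt n i)"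
    using i nxt_less[OF i] framed_length[OF F] by auto
  note f = framed_edge[OF F i]
  show "B ! i \<noteq> B ! nxt n i" using f(1) .
  show "cmod (map uminus u ! i) = 1" using f(2) mi by simp
  have "(- (u ! nxt n i)) * cnj (B ! nxt n i - B ! i) = (B ! nxt n i - B ! i) * cnj (- (u ! i))"
    using f(4) by simp
  then show "ccw_angle (map uminus u ! i) (B ! nxt n i - B ! i)
      = ccw_angle (B ! nxt n i - B ! i) (map uminus u ! nxt n i)"
    unfolding mi using ccw_angle_eq_iff_reflection[of "- (u ! i)" "- (u ! nxt n i)" "B ! nxt n i - B ! i"] f
    by simp
qed

lemma generic_framed_imp_framed: "p \<in> generic_framed n \<Longrightarrow> p \<in> framed n"
  unfolding generic_framed_def by auto

lemma generic_framed_uminus_frame: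
  assumes G: "(B, u) \<in> generic_framed n"
  shows "(B, map uminus u) \<in> generic_framed n"
  unfolding generic_framed_def
proof (intro CollectI case_prodI conjI notI)
  have F: "(B, u) \<in> framed n" using generic_framed_imp_framed[OF G] .
  then show "(B, map uminus u) \<in> framed n" by (rule framed_uminus_frame)
  assume "\<exists>i<n. \<exists>S\<in>gcircles. tangent_at S (B ! prv n i) (map uminus u ! prv n i) \<and>
      tangent_at S (B ! i) (map uminus u ! i) \<and> tangent_at S (B ! nxt n i) (map uminus u ! nxt n i)"
  then obtain i S where i: "i < n" and S: "S \<in> gcircles"
      "tangent_at S (B ! prv n i) (map uminus u ! prv n i)" "tangent_at S (B ! i) (map uminus u ! i)"
      "tangent_at S (B ! nxt n i) (map uminus u ! nxt n i)" by blast
  have "map uminus u ! prv n i = - (u ! prv n i)" "map uminus u ! i = - (u ! i)"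
    "map uminus u ! nxt n i = - (u ! nxt n i)"
    using i nxt_less[OF i] prv_less[OF i] framed_length[OF F] by auto
  then have "tangent_at S (B ! prv n i) (u ! prv n i)" "tangent_at S (B ! i) (u ! i)"
    "tangent_at S (B ! nxt n i) (u ! nxt n i)"
    using S tangent_at_uminus by auto
  then show False using G i S(1) unfolding generic_framed_def by blast
qed

lemma length_chain_of [simp]: "length (chain_of n p) = n"
  unfolding chain_of_def by simp

lemma nth_chain_of:
  "i < n \<Longrightarrow> chain_of n (B, u) ! i =
     (THE \<Gamma>. \<Gamma> \<in> oriented_circles \<and> (B ! prv n i, u ! prv n i) \<in> \<Gamma> \<and> (B ! i, u ! i) \<in> \<Gamma>)"
  unfolding chain_of_def by simp

lemma chain_of_eqI:
  assumes "(B, u) \<in> framed n" "i < n" "\<Gamma> \<in> oriented_circles"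
    "(B ! prv n i, u ! prv n i) \<in> \<Gamma>" "(B ! i, u ! i) \<in> \<Gamma>"
  shows "chain_of n (B, u) ! i = \<Gamma>"
  unfolding nth_chain_of[OF assms(2)]
  by (rule the1_equality[OF framed_unique_circles(1)[OF assms(1,2)]]) (use assms(3-) in blast)

lemma chain_of_contact:
  assumes "(B, u) \<in> framed n" "i < n"
  shows "chain_of n (B, u) ! i \<in> oriented_circles" "(B ! prv n i, u ! prv n i) \<in> chain_of n (B, u) ! i"
    "(B ! i, u ! i) \<in> chain_of n (B, u) ! i"
  unfolding nth_chain_of[OF assms(2)] using theI'[OF framed_unique_circles(1)[OF assms]] by auto

lemma chain_of_contact_nxt:
  assumes "(B, u) \<in> framed n" "i < n"
  shows "chain_of n (B, u) ! nxt n i \<in> oriented_circles" "(B ! i, u ! i) \<in> chain_of n (B, u) ! nxt n i"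
  using chain_of_contact[OF assms(1) nxt_less[OF assms(2)]] unfolding prv_nxt[OF assms(2)] by auto

lemma generic_framed_consecutive_circles_differ:
  assumes G: "(B, u) \<in> generic_framed n" and i: "i < n"
  shows "fst ` (chain_of n (B, u) ! i) \<noteq> fst ` (chain_of n (B, u) ! nxt n i)"
proof
  assume eq: "fst ` (chain_of n (B, u) ! i) = fst ` (chain_of n (B, u) ! nxt n i)"
  have F: "(B, u) \<in> framed n" using generic_framed_imp_framed[OF G] .
  let ?S = "fst ` (chain_of n (B, u) ! i)"
  note c = chain_of_contact[OF F i] and c' = chain_of_contact[OF F nxt_less[OF i]]
  have "?S \<in> gcircles" unfolding gcircles_def using c(1) by (rule imageI)
  moreover have "tangent_at ?S (B ! prv n i) (u ! prv n i)" "tangent_at ?S (B ! i) (u ! i)"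
    using tangent_at_imageI[OF c(1) c(2)] tangent_at_imageI[OF c(1) c(3)] .
  moreover have "tangent_at ?S (B ! nxt n i) (u ! nxt n i)"
    unfolding eq using tangent_at_imageI[OF c'(1) c'(3)] .
  ultimately show False using G i unfolding generic_framed_def by blast
qed

lemma chain_of_meet:
  assumes G: "(B, u) \<in> generic_framed n" and i: "i < n"
  shows "chain_of n (B, u) ! i \<inter> chain_of n (B, u) ! nxt n i = {(B ! i, u ! i)}"
    "tangency_point (chain_of n (B, u) ! i) (chain_of n (B, u) ! nxt n i) = B ! i"
proof -
  have F: "(B, u) \<in> framed n" using generic_framed_imp_framed[OF G] .
  note c = chain_of_contact[OF F i] and c' = chain_of_contact_nxt[OF F i]
  show "chain_of n (B, u) ! i \<inter> chain_of n (B, u) ! nxt n i = {(B ! i, u ! i)}"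
    "tangency_point (chain_of n (B, u) ! i) (chain_of n (B, u) ! nxt n i) = B ! i"
    using tangent_oriented_circles_meet[OF c(1) c'(1) c(3) c'(2) generic_framed_consecutive_circles_differ[OF G i]]
    by auto
qed

lemma chain_of_in_generic_chains:
  assumes G: "p \<in> generic_framed n"
  shows "chain_of n p \<in> generic_chains n"
proof -
  obtain B u where p: "p = (B, u)" by (cases p)
  have G': "(B, u) \<in> generic_framed n" using G p by simp
  have F: "(B, u) \<in> framed n" using generic_framed_imp_framed[OF G'] .
  let ?C = "chain_of n (B, u)"
  have "?C \<in> oriented_chains n"
    unfolding oriented_chains_def
  proof (intro CollectI conjI allI impI)
    show "length ?C = n" by simp
    fix i assume i: "i < n"
    show "?C ! i \<in> oriented_circles" using chain_of_contact(1)[OF F i] .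
    show "fst ` (?C ! i) \<noteq> fst ` (?C ! nxt n i)" using generic_framed_consecutive_circles_differ[OF G' i] .
    show "?C ! i \<inter> ?C ! nxt n i \<noteq> {}" using chain_of_meet(1)[OF G' i] by simp
  qed
  moreover have "tangency_point (?C ! prv n i) (?C ! i) \<noteq> tangency_point (?C ! i) (?C ! nxt n i)"
    if i: "i < n" for i
    using chain_of_meet(2)[OF G' prv_less[OF i]] chain_of_meet(2)[OF G' i] framed_prv_edge(1)[OF F i]
    unfolding nxt_prv[OF i] by simp
  ultimately show ?thesis unfolding generic_chains_def p by blast
qed

lemma chain_of_uminus_frame:
  assumes F: "(B, u) \<in> framed n"
  shows "chain_of n (B, map uminus u) = map reverse_orientation (chain_of n (B, u))"
proof (rule nth_equalityI)
  fix i assume "i < length (chain_of n (B, map uminus u))"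
  then have i: "i < n" by simp
  have "map uminus u ! prv n i = - (u ! prv n i)" "map uminus u ! i = - (u ! i)"
    using i prv_less[OF i] framed_length[OF F] by auto
  then have "chain_of n (B, map uminus u) ! i = reverse_orientation (chain_of n (B, u) ! i)"
    using chain_of_eqI[OF framed_uminus_frame[OF F] i] chain_of_contact[OF F i]
      reverse_orientation_in_oriented_circles mem_reverse_orientation by simp
  then show "chain_of n (B, map uminus u) ! i = map reverse_orientation (chain_of n (B, u)) ! i"
    using i by simp
qed simp

lemma chain_of_respects_frame_rel:
  assumes "(p, q) \<in> frame_rel n"
  shows "(chain_of n p, chain_of n q) \<in> chain_rel n"
proof -
  obtain B u where p: "p = (B, u)" by (cases p)
  have G: "p \<in> generic_framed n" "q \<in> generic_framed n"
    and q: "fst q = B" "snd q = u \<or> snd q = map uminus u"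
    using assms unfolding frame_rel_def p by auto
  have "q = (B, u) \<or> q = (B, map uminus u)" using q by (cases q) auto
  then have "chain_of n q = chain_of n p \<or> chain_of n q = map reverse_orientation (chain_of n p)"
    using chain_of_uminus_frame generic_framed_imp_framed G(1) p by auto
  then show ?thesis unfolding chain_rel_def using chain_of_in_generic_chains G by blast
qed

lemma chain_of_inj:
  assumes "p \<in> generic_framed n" "q \<in> generic_framed n" "chain_of n p = chain_of n q"
  shows "p = q"
proof -
  obtain B u B' u' where p: "p = (B, u)" and q: "q = (B', u')" by (cases p, cases q)
  have "length B = n" "length u = n" "length B' = n" "length u' = n"
    using framed_length generic_framed_imp_framed assms(1,2) p q by blast+
  moreover have "B ! i = B' ! i \<and> u ! i = u' ! i" if i: "i < n" for i
    using chain_of_meet(1)[OF assms(1)[unfolded p] i] chain_of_meet(1)[OF assms(2)[unfolded q] i] assms(3) p q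
    by simp
  ultimately show ?thesis using p q by (simp add: list_eq_iff_nth_eq)
qed

lemma chain_rel_imp_frame_rel:
  assumes G: "p \<in> generic_framed n" "q \<in> generic_framed n"
    and "(chain_of n p, chain_of n q) \<in> chain_rel n"
  shows "(p, q) \<in> frame_rel n"
proof -
  obtain B u where p: "p = (B, u)" by (cases p)
  have "chain_of n q = chain_of n p \<or> chain_of n q = chain_of n (B, map uminus u)"
    using assms(3) chain_of_uminus_frame[OF generic_framed_imp_framed[OF G(1)[unfolded p]]] p
    unfolding chain_rel_def by auto
  then have "q = p \<or> q = (B, map uminus u)"
    using chain_of_inj[OF G(2) G(1)] chain_of_inj[OF G(2) generic_framed_uminus_frame[OF G(1)[unfolded p]]]
    by blast
  then show ?thesis unfolding frame_rel_def using G p by auto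
qed

lemma equiv_frame_rel: "equiv (generic_framed n) (frame_rel n)"
proof (rule equivI)
  have neg_neg: "map uminus (map uminus u) = u" for u :: "complex list" by (induction u) auto
  show "frame_rel n \<subseteq> generic_framed n \<times> generic_framed n" unfolding frame_rel_def by auto
  show "refl_on (generic_framed n) (frame_rel n)" unfolding refl_on_def frame_rel_def by auto
  show "sym (frame_rel n)" unfolding sym_def frame_rel_def using neg_neg by fastforce
  show "trans (frame_rel n)" unfolding trans_def frame_rel_def using neg_neg by fastforce
qed

lemma equiv_chain_rel: "equiv (generic_chains n) (chain_rel n)"
proof (rule equivI)
  have rev_rev: "map reverse_orientation (map reverse_orientation C) = C" for C
    by (induction C) (auto simp: reverse_orientation_involution)
  show "chain_rel n \<subseteq> generic_chains n \<times> generic_chains n" unfolding chain_rel_def by auto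
  show "refl_on (generic_chains n) (chain_rel n)" unfolding refl_on_def chain_rel_def by auto
  show "sym (chain_rel n)" unfolding sym_def chain_rel_def using rev_rev by fastforce
  show "trans (chain_rel n)" unfolding trans_def chain_rel_def using rev_rev by fastforce
qed

section \<open>The inverse map and the bijection\<close>

definition contact_polygon :: "nat \<Rightarrow> (complex \<times> complex) set list \<Rightarrow> complex list \<times> complex list" where
  "contact_polygon n C =
     (map (\<lambda>i. fst (the_elem (C ! i \<inter> C ! nxt n i))) [0..<n],
      map (\<lambda>i. snd (the_elem (C ! i \<inter> C ! nxt n i))) [0..<n])"

lemma contact_polygon_meet:
  assumes C: "C \<in> oriented_chains n" and i: "i < n" and BU: "contact_polygon n C = (B, u)"
  shows "C ! i \<inter> C ! nxt n i = {(B ! i, u ! i)}" "tangency_point (C ! i) (C ! nxt n i) = B ! i"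
proof -
  have Ci: "C ! i \<in> oriented_circles" "C ! nxt n i \<in> oriented_circles"
      "fst ` (C ! i) \<noteq> fst ` (C ! nxt n i)" "C ! i \<inter> C ! nxt n i \<noteq> {}"
    using C i nxt_less[OF i] unfolding oriented_chains_def by auto
  then obtain p v where pv: "(p, v) \<in> C ! i" "(p, v) \<in> C ! nxt n i" by auto
  note meet = tangent_oriented_circles_meet[OF Ci(1,2) pv Ci(3)]
  have "B = map (\<lambda>i. fst (the_elem (C ! i \<inter> C ! nxt n i))) [0..<n]"
    "u = map (\<lambda>i. snd (the_elem (C ! i \<inter> C ! nxt n i))) [0..<n]"
    using BU unfolding contact_polygon_def by simp_all
  then have "B ! i = p" "u ! i = v" using i meet(1) by simp_all
  then show "C ! i \<inter> C ! nxt n i = {(B ! i, u ! i)}" "tangency_point (C ! i) (C ! nxt n i) = B ! i"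
    using meet by simp_all
qed

lemma contact_polygon_vertices_distinct:
  assumes C: "C \<in> generic_chains n" and i: "i < n" and BU: "contact_polygon n C = (B, u)"
  shows "B ! i \<noteq> B ! nxt n i"
proof -
  have OC: "C \<in> oriented_chains n" using C unfolding generic_chains_def by auto
  have "tangency_point (C ! prv n (nxt n i)) (C ! nxt n i)
      \<noteq> tangency_point (C ! nxt n i) (C ! nxt n (nxt n i))"
    using C nxt_less[OF i] unfolding generic_chains_def by blast
  then show ?thesis
    using contact_polygon_meet(2)[OF OC i BU] contact_polygon_meet(2)[OF OC nxt_less[OF i] BU]
    unfolding prv_nxt[OF i] by simp
qed

lemma contact_polygon_in_generic_framed:
  assumes C: "C \<in> generic_chains n" and BU: "contact_polygon n C = (B, u)"
  shows "(B, u) \<in> generic_framed n"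
proof -
  have OC: "C \<in> oriented_chains n" using C unfolding generic_chains_def by auto
  have Ci: "C ! i \<in> oriented_circles" "fst ` (C ! i) \<noteq> fst ` (C ! nxt n i)" if "i < n" for i
    using OC that unfolding oriented_chains_def by auto
  have m: "(B ! i, u ! i) \<in> C ! i" "(B ! i, u ! i) \<in> C ! nxt n i" if "i < n" for i
    using contact_polygon_meet(1)[OF OC that BU] by auto
  have m0: "(B ! prv n i, u ! prv n i) \<in> C ! i" if i: "i < n" for i
    using m(2)[OF prv_less[OF i]] unfolding nxt_prv[OF i] .
  note dist = contact_polygon_vertices_distinct[OF C _ BU]
  have F: "(B, u) \<in> framed n"
    unfolding framed_def
  proof (intro CollectI case_prodI conjI allI impI)
    show "length B = n" "length u = n" using BU unfolding contact_polygon_def by auto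
    fix i assume i: "i < n"
    note j = nxt_less[OF i]
    have u1: "cmod (u ! i) = 1" "cmod (u ! nxt n i) = 1"
      using oriented_circle_unit_tangent[OF Ci(1)[OF i] m(1)[OF i]]
        oriented_circle_unit_tangent[OF Ci(1)[OF j] m(1)[OF j]] .
    show "B ! i \<noteq> B ! nxt n i" "cmod (u ! i) = 1" using dist[OF i] u1 by simp_all
    show "ccw_angle (u ! i) (B ! nxt n i - B ! i) = ccw_angle (B ! nxt n i - B ! i) (u ! nxt n i)"
      using ccw_angle_eq_iff_reflection[OF u1] dist[OF i] oriented_circle_reflection[OF Ci(1)[OF j] m(2)[OF i] m(1)[OF j]]
      by simp
  qed
  show ?thesis
    unfolding generic_framed_def
  proof (intro CollectI case_prodI conjI F notI)
    assume "\<exists>i<n. \<exists>S\<in>gcircles. tangent_at S (B ! prv n i) (u ! prv n i) \<and> tangent_at S (B ! i) (u ! i) \<and>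
          tangent_at S (B ! nxt n i) (u ! nxt n i)"
    then obtain i S where i: "i < n" and S: "tangent_at S (B ! prv n i) (u ! prv n i)"
      "tangent_at S (B ! i) (u ! i)" "tangent_at S (B ! nxt n i) (u ! nxt n i)" by blast
    note j = nxt_less[OF i]
    have "B ! prv n i \<noteq> B ! i" using dist[OF prv_less[OF i]] unfolding nxt_prv[OF i] .
    then have "S = fst ` (C ! i)"
      using gcircle_eq_if_tangent[OF Ci(1)[OF i] m0[OF i] m(1)[OF i] _ S(1)] S(2) unfolding tangent_at_def by blast
    moreover have "S = fst ` (C ! nxt n i)"
      using gcircle_eq_if_tangent[OF Ci(1)[OF j] m(2)[OF i] m(1)[OF j] dist[OF i] S(2)] S(3)
      unfolding tangent_at_def by blast
    ultimately show False using Ci(2)[OF i] by simp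
  qed
qed

lemma chain_of_contact_polygon:
  assumes C: "C \<in> generic_chains n"
  shows "chain_of n (contact_polygon n C) = C"
proof -
  obtain B u where BU: "contact_polygon n C = (B, u)" by (cases "contact_polygon n C")
  have F: "(B, u) \<in> framed n"
    using generic_framed_imp_framed[OF contact_polygon_in_generic_framed[OF C BU]] .
  have OC: "C \<in> oriented_chains n" using C unfolding generic_chains_def by auto
  have "chain_of n (B, u) ! i = C ! i" if i: "i < n" for i
  proof (rule chain_of_eqI[OF F i])
    show "C ! i \<in> oriented_circles" using OC i unfolding oriented_chains_def by auto
    show "(B ! prv n i, u ! prv n i) \<in> C ! i"
      using contact_polygon_meet(1)[OF OC prv_less[OF i] BU] unfolding nxt_prv[OF i] by auto
    show "(B ! i, u ! i) \<in> C ! i" using contact_polygon_meet(1)[OF OC i BU] by auto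
  qed
  moreover have "length C = n" using OC unfolding oriented_chains_def by auto
  ultimately show ?thesis using BU by (simp add: list_eq_iff_nth_eq)
qed

lemma generic_chain_in_image_chain_of:
  assumes "C \<in> generic_chains n"
  shows "\<exists>p\<in>generic_framed n. chain_of n p = C"
proof -
  obtain B u where BU: "contact_polygon n C = (B, u)" by (cases "contact_polygon n C")
  show ?thesis
    using contact_polygon_in_generic_framed[OF assms BU] chain_of_contact_polygon[OF assms] BU by auto
qed

lemma quotient_map_class:
  assumes "equiv A R" "equiv B S" "\<And>x y. (x, y) \<in> R \<Longrightarrow> (f x, f y) \<in> S" "x \<in> A"
  shows "S `` {f (SOME y. y \<in> R `` {x})} = S `` {f x}"
proof -
  have "(SOME y. y \<in> R `` {x}) \<in> R `` {x}"
    using equiv_class_self[OF assms(1,4)] by (rule someI)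
  then have "(f x, f (SOME y. y \<in> R `` {x})) \<in> S" using assms(3) by simp
  from equiv_class_eq[OF assms(2) this] show ?thesis by simp
qed

lemma bij_betw_quotient_map:
  assumes eqR: "equiv A R" and eqS: "equiv B S" and f: "\<And>x. x \<in> A \<Longrightarrow> f x \<in> B"
    and respects: "\<And>x y. (x, y) \<in> R \<Longrightarrow> (f x, f y) \<in> S"
    and reflects: "\<And>x y. x \<in> A \<Longrightarrow> y \<in> A \<Longrightarrow> (f x, f y) \<in> S \<Longrightarrow> (x, y) \<in> R"
    and surj: "\<And>z. z \<in> B \<Longrightarrow> \<exists>x\<in>A. f x = z"
  shows "bij_betw (\<lambda>X. S `` {f (SOME x. x \<in> X)}) (A // R) (B // S)"
    (is "bij_betw ?F _ _")
proof -
  have F: "?F (R `` {x}) = S `` {f x}" if "x \<in> A" for x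
    using quotient_map_class[OF eqR eqS respects that] .
  show ?thesis unfolding bij_betw_def
  proof
    show "inj_on ?F (A // R)"
    proof (rule inj_onI)
      fix X Y assume X: "X \<in> A // R" and Y: "Y \<in> A // R" and XY: "?F X = ?F Y"
      obtain x where x: "X = R `` {x}" "x \<in> A" using X by (rule quotientE)
      obtain y where y: "Y = R `` {y}" "y \<in> A" using Y by (rule quotientE)
      have "S `` {f x} = S `` {f y}" using XY x y F by simp
      then have "(f x, f y) \<in> S" using eq_equiv_class_iff[OF eqS f[OF x(2)] f[OF y(2)]] by simp
      then have "(x, y) \<in> R" using reflects x(2) y(2) by blast
      then show "X = Y" using x y equiv_class_eq[OF eqR] by simp
    qed
    show "?F ` (A // R) = B // S"
    proof
      show "?F ` (A // R) \<subseteq> B // S"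
      proof
        fix Z assume "Z \<in> ?F ` (A // R)"
        then obtain X where X: "X \<in> A // R" "Z = ?F X" by blast
        obtain x where "X = R `` {x}" "x \<in> A" using X(1) by (rule quotientE)
        then show "Z \<in> B // S" using X(2) F f by (simp add: quotientI)
      qed
      show "B // S \<subseteq> ?F ` (A // R)"
      proof
        fix Z assume "Z \<in> B // S"
        then obtain b where b: "Z = S `` {b}" "b \<in> B" by (rule quotientE)
        then obtain x where x: "x \<in> A" "f x = b" using surj by blast
        then have "Z = ?F (R `` {x})" using b F by simp
        then show "Z \<in> ?F ` (A // R)" using x(1) by (blast intro: quotientI)
      qed
    qed
  qed
qed

theorem proposition2p9:
  fixes n :: nat
  assumes "n \<ge> 3"
  shows "(\<forall>(B, u) \<in> generic_framed n. \<forall>i<n.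
            (\<exists>!S. S \<in> gcircles \<and> tangent_at S (B ! prv n i) (u ! prv n i) \<and> tangent_at S (B ! i) (u ! i)) \<and>
            (\<exists>!\<Gamma>. \<Gamma> \<in> oriented_circles \<and> (B ! prv n i, u ! prv n i) \<in> \<Gamma> \<and> (B ! i, u ! i) \<in> \<Gamma>))
       \<and> (\<forall>p \<in> generic_framed n. chain_of n p \<in> generic_chains n)
       \<and> (\<forall>(p, q) \<in> frame_rel n. (chain_of n p, chain_of n q) \<in> chain_rel n)
       \<and> bij_betw (chain_map n) (generic_framed n // frame_rel n) (generic_chains n // chain_rel n)"
proof (intro conjI)
  show "\<forall>(B, u) \<in> generic_framed n. \<forall>i<n.
      (\<exists>!S. S \<in> gcircles \<and> tangent_at S (B ! prv n i) (u ! prv n i) \<and> tangent_at S (B ! i) (u ! i)) \<and>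
      (\<exists>!\<Gamma>. \<Gamma> \<in> oriented_circles \<and> (B ! prv n i, u ! prv n i) \<in> \<Gamma> \<and> (B ! i, u ! i) \<in> \<Gamma>)"
    using framed_unique_circles[OF generic_framed_imp_framed] by blast
  show "\<forall>p \<in> generic_framed n. chain_of n p \<in> generic_chains n"
    using chain_of_in_generic_chains by blast
  show "\<forall>(p, q) \<in> frame_rel n. (chain_of n p, chain_of n q) \<in> chain_rel n"
    using chain_of_respects_frame_rel by blast
  show "bij_betw (chain_map n) (generic_framed n // frame_rel n) (generic_chains n // chain_rel n)"
    unfolding chain_map_def[abs_def]
    by (rule bij_betw_quotient_map[OF equiv_frame_rel equiv_chain_rel chain_of_in_generic_chains
          chain_of_respects_frame_rel chain_rel_imp_frame_rel generic_chain_in_image_chain_of])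
qed

end
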